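(* Let $p\in(1,2]$ and let $\varphi:\mathbb{R}^n\to\mathbb{R}\cup\{+\infty\}$ be proper and lower semicontinuous. Suppose $\bar x=0$ is a $p$-calm point of $\varphi$ with constant $M>0$, $\varphi(0)=0$, and $\varphi$ is $q$-prox-regular with some $q\ge2$ at $\bar x=0$ for $\bar\zeta=0\in\partial\varphi(0)$ with constants $\varepsilon>0$ and $\rho>0$. Then for each $\gamma\in\big(0,\frac{2^{1-p}}{Mp}\big)$ when $p\in(1,2)$, and each $\gamma\in\big(0,\min\{\frac1{4M},\frac1\rho\}\big)$ when $p=2$, there exists a neighbourhood $U$ of $0$ such that $\operatorname{prox}^p_{\gamma\varphi}$ is single-valued and continuous on $U$ and $\varphi^p_\gamma\in C^1(U)$.
   Context: $\operatorname{prox}^p_{\gamma\varphi}(x):=\operatorname{argmin}_{y}\big(\varphi(y)+\frac{1}{p\gamma}\|x-y\|^p\big)$, $\varphi^p_\gamma(x):=\inf_y\big(\varphi(y)+\frac{1}{p\gamma}\|x-y\|^p\big)$. $\bar x$ is a $p$-calm point with constant $M>0$ if $\varphi(x)+M\|x-\bar x\|^p>\varphi(\bar x)$ for all $x\neq\bar x$. $\partial$ denotes the Mordukhovich (limiting) subdifferential. $\varphi$ is $q$-prox-regular ($q\ge2$) at $\bar x\in\operatorname{dom}\varphi$ for $\bar\zeta\in\partial\varphi(\bar x)$ with constants $\varepsilon>0,\rho\ge0$ if $\varphi(x')\ge\varphi(x)+\langle\zeta,x'-x\rangle-\frac\rho2\|x'-x\|^q$ for all $x'\in\mathbb{B}(\bar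 x;\varepsilon)$, whenever $x\in\mathbb{B}(\bar x;\varepsilon)$, $\zeta\in\partial\varphi(x)\cap\mathbb{B}(\bar\zeta;\varepsilon)$ and $\varphi(x)<\varphi(\bar x)+\varepsilon$. *)

theory Defs
  imports "HOL-Analysis.Analysis" "HOL-Library.Extended_Real"
begin

definition proper_fun :: "('a \<Rightarrow> ereal) \<Rightarrow> bool" where
  "proper_fun \<phi> \<longleftrightarrow> (\<forall>x. \<phi> x \<noteq> -\<infinity>) \<and> (\<exists>x. \<phi> x \<noteq> \<infinity>)"

definition lsc :: "('a::topological_space \<Rightarrow> ereal) \<Rightarrow> bool" where
  "lsc \<phi> \<longleftrightarrow> (\<forall>x. \<phi> x \<le> Liminf (at x) \<phi>)"

definition frechet_subdiff :: "('a::real_inner \<Rightarrow> ereal) \<Rightarrow> 'a \<Rightarrow> 'a set" where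
  "frechet_subdiff \<phi> x = {\<zeta>. \<bar>\<phi> x\<bar> \<noteq> \<infinity> \<and>
     (\<forall>e>0. \<exists>d>0. \<forall>y. norm (y - x) < d \<longrightarrow>
         \<phi> y \<ge> \<phi> x + ereal (inner \<zeta> (y - x) - e * norm (y - x)))}"

definition limiting_subdiff :: "('a::real_inner \<Rightarrow> ereal) \<Rightarrow> 'a \<Rightarrow> 'a set" where
  "limiting_subdiff \<phi> x = {\<zeta>. \<bar>\<phi> x\<bar> \<noteq> \<infinity> \<and>
     (\<exists>xs zs. xs \<longlonglongrightarrow> x \<and> (\<lambda>k. \<phi> (xs k)) \<longlonglongrightarrow> \<phi> x \<and> zs \<longlonglongrightarrow> \<zeta> \<and>
              (\<forall>k. zs k \<in> frechet_subdiff \<phi> (xs k)))}"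

definition p_calm :: "real \<Rightarrow> ('a::real_normed_vector \<Rightarrow> ereal) \<Rightarrow> 'a \<Rightarrow> real \<Rightarrow> bool" where
  "p_calm p \<phi> xb M \<longleftrightarrow> (\<forall>x. x \<noteq> xb \<longrightarrow> \<phi> x + ereal (M * norm (x - xb) powr p) > \<phi> xb)"

definition q_prox_regular ::
  "real \<Rightarrow> ('a::real_inner \<Rightarrow> ereal) \<Rightarrow> 'a \<Rightarrow> 'a \<Rightarrow> real \<Rightarrow> real \<Rightarrow> bool" where
  "q_prox_regular q \<phi> xb \<zeta>b \<epsilon> \<rho> \<longleftrightarrow>
     \<bar>\<phi> xb\<bar> \<noteq> \<infinity> \<and> \<zeta>b \<in> limiting_subdiff \<phi> xb \<and> \<epsilon> > 0 \<and> \<rho> \<ge> 0 \<and>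
     (\<forall>x \<zeta>. x \<in> cball xb \<epsilon> \<and> \<zeta> \<in> limiting_subdiff \<phi> x \<inter> cball \<zeta>b \<epsilon> \<and>
            \<phi> x < \<phi> xb + ereal \<epsilon> \<longrightarrow>
        (\<forall>x' \<in> cball xb \<epsilon>.
           \<phi> x' \<ge> \<phi> x + ereal (inner \<zeta> (x' - x) - \<rho> / 2 * norm (x' - x) powr q)))"

definition prox :: "real \<Rightarrow> real \<Rightarrow> ('a::real_normed_vector \<Rightarrow> ereal) \<Rightarrow> 'a \<Rightarrow> 'a set" where
  "prox p \<gamma> \<phi> x = {y. \<forall>z. \<phi> y + ereal (norm (x - y) powr p / (p * \<gamma>))
                          \<le> \<phi> z + ereal (norm (x - z) powr p / (p * \<gamma>))}"

definition moreau_env :: "real \<Rightarrow> real \<Rightarrow> ('a::real_normed_vector \<Rightarrow> ereal) \<Rightarrow> 'a \<Rightarrow> ereal" where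
  "moreau_env p \<gamma> \<phi> x = (INF y. \<phi> y + ereal (norm (x - y) powr p / (p * \<gamma>)))"

definition C1_on :: "'a::real_inner set \<Rightarrow> ('a \<Rightarrow> ereal) \<Rightarrow> bool" where
  "C1_on U f \<longleftrightarrow> (\<exists>F g. (\<forall>x\<in>U. f x = ereal (F x) \<and>
        (F has_derivative (\<lambda>h. inner (g x) h)) (at x)) \<and> continuous_on U g)"

end

theory Submission
  imports Defs
begin

text \<open>
  Write \<open>g u = \<parallel>u\<parallel>\<^sup>p\<^sup>-\<^sup>2 u\<close> for the gradient of \<open>\<parallel>u\<parallel>\<^sup>p / p\<close>. For \<open>1 < p \<le> 2\<close> the map
  \<open>u \<mapsto> \<parallel>u\<parallel>\<^sup>p\<close> is convex, and on the ball of radius \<open>R\<close> it is strongly convex with modulus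
  \<open>(p - 1) R\<^sup>p\<^sup>-\<^sup>2\<close>. Convexity gives \<open>\<parallel>x - y\<parallel>\<^sup>p \<ge> 2\<^sup>1\<^sup>-\<^sup>p \<parallel>y\<parallel>\<^sup>p - \<parallel>x\<parallel>\<^sup>p\<close>, and the bound on \<open>\<gamma>\<close>
  is exactly what makes the prox objective \<open>\<phi> y + \<parallel>x - y\<parallel>\<^sup>p / (p \<gamma>)\<close> coercive despite the
  calmness bound \<open>\<phi> y \<ge> -M \<parallel>y\<parallel>\<^sup>p\<close>. So proximal points \<open>y\<close> of \<open>x\<close> exist, satisfy
  \<open>\<parallel>y\<parallel> \<le> C \<parallel>x\<parallel>\<close>, and \<open>g (x - y) / \<gamma>\<close> is a subgradient of \<open>\<phi>\<close> at \<open>y\<close>.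

  Near \<open>0\<close>, prox-regularity makes these subgradients hypomonotone with constant \<open>\<rho>\<close>, while
  \<open>g\<close> is strongly monotone with constant \<open>(p - 1) R\<^sup>p\<^sup>-\<^sup>2\<close> on the ball of radius \<open>R\<close>; this
  constant blows up as \<open>R \<rightarrow> 0\<close> when \<open>p < 2\<close> and equals \<open>1 > \<rho> \<gamma>\<close> when \<open>p = 2\<close>. Strong
  monotonicity therefore wins on a small ball, which yields the Hoelder-type estimate
  \<open>\<theta> \<parallel>(x\<^sub>1 - y\<^sub>1) - (x\<^sub>2 - y\<^sub>2)\<parallel>\<^sup>2 \<le> K \<parallel>x\<^sub>1 - x\<^sub>2\<parallel>\<close>, hence uniqueness and continuity of
  the prox. Finally the envelope is squeezed between two linearizations with slopes
  \<open>g (x' - y) / \<gamma>\<close> and \<open>g (x - y') / \<gamma>\<close>, which both tend to \<open>g (x - y) / \<gamma>\<close>.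
\<close>

section \<open>The gradient of the \<open>p\<close>-th power of the norm\<close>

lemma quadratic_le_powr:
  fixes p R t :: real
  assumes "p \<le> 2" and "0 \<le> t" "t \<le> R"
  shows "R powr (p - 2) * t^2 \<le> t powr p"
proof (cases "t = 0")
  case False
  have "R powr (p - 2) \<le> t powr (p - 2)"
    using powr_mono2'[of "p - 2" t R] False assms by simp
  then have "R powr (p - 2) * t^2 \<le> t powr (p - 2) * t powr 2"
    using False assms by (simp add: powr_realpow mult_right_mono)
  then show ?thesis by (simp add: powr_add[symmetric])
qed simp

lemma powr_minus_quadratic_tangent:
  fixes p R a b :: real
  assumes p: "1 < p" "p \<le> 2" and a: "0 < a" "a \<le> R" and b: "0 < b" "b \<le> R"
  shows "a powr p + p * a powr (p - 1) * (b - a) + (p * (p - 1) * R powr (p - 2) / 2) * (b - a)^2 \<le> b powr p"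
proof -
  define c where "c = p * (p - 1) * R powr (p - 2) / 2"
  define f where "f t = t powr p - c * t^2" for t
  define f' where "f' t = p * t powr (p - 1) - 2 * c * t" for t
  define f'' where "f'' t = p * (p - 1) * t powr (p - 2) - 2 * c" for t
  have "f' a * (b - a) \<le> f b - f a"
  proof (rule f''_imp_f'[of "{0<..R}"])
    show "DERIV f t :> f' t" if "t \<in> {0<..R}" for t
      using that unfolding f_def f'_def by (auto intro!: derivative_eq_intros has_real_derivative_powr)
    show "DERIV f' t :> f'' t" if "t \<in> {0<..R}" for t
      using that unfolding f'_def f''_def by (auto intro!: derivative_eq_intros has_real_derivative_powr)
    show "0 \<le> f'' t" if "t \<in> {0<..R}" for t
      using that powr_mono2'[of "p - 2" t R] p by (auto simp: f''_def c_def)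
  qed (use a b in auto)
  then have "a powr p + p * a powr (p - 1) * (b - a) + c * (b - a)^2 \<le> b powr p"
    by (simp add: f_def f'_def algebra_simps power2_eq_square)
  then show ?thesis by (simp add: c_def)
qed

lemma powr_strong_convexity:
  fixes p R a b :: real
  assumes p: "1 < p" "p \<le> 2" and a: "0 \<le> a" "a \<le> R" and b: "0 \<le> b" "b \<le> R"
  shows "a powr p + p * a powr (p - 1) * (b - a) + (p * (p - 1) * R powr (p - 2) / 2) * (b - a)^2 \<le> b powr p"
proof -
  define c where "c = p * (p - 1) * R powr (p - 2) / 2"
  have c_le: "c \<le> (p - 1) * R powr (p - 2)"
    using mult_right_mono[of "p / 2" 1 "(p - 1) * R powr (p - 2)"] p by (simp add: c_def)
  also have "\<dots> \<le> R powr (p - 2)"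
    using mult_right_mono[of "p - 1" 1 "R powr (p - 2)"] p by simp
  finally have "c \<le> R powr (p - 2)" .
  consider "a = 0" | "b = 0" | "0 < a" "0 < b" using a b by linarith
  then show ?thesis
  proof cases
    case 1
    have "c * b^2 \<le> R powr (p - 2) * b^2"
      using \<open>c \<le> R powr (p - 2)\<close> by (simp add: mult_right_mono)
    then show ?thesis using 1 quadratic_le_powr[OF p(2) b] p by (simp add: c_def)
  next
    case 2
    have "c * a^2 \<le> (p - 1) * (R powr (p - 2) * a^2)"
      using mult_right_mono[OF c_le, of "a^2"] by (simp add: mult.assoc)
    also have "\<dots> \<le> (p - 1) * a powr p"
      using quadratic_le_powr[OF p(2) a] p by (simp add: mult_left_mono)
    finally have "c * a^2 \<le> (p - 1) * a powr p" .
    moreover have "a powr (p - 1) * a = a powr p"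
      using powr_add[of a "p - 1" 1] a by (cases "a = 0") auto
    ultimately show ?thesis using 2
      by (simp add: c_def algebra_simps power2_eq_square)
  next
    case 3
    then show ?thesis using powr_minus_quadratic_tangent[OF p] a b by simp
  qed
qed

definition norm_powr_grad :: "real \<Rightarrow> 'a::real_inner \<Rightarrow> 'a" where
  "norm_powr_grad p u = norm u powr (p - 2) *\<^sub>R u"

lemma norm_norm_powr_grad: "norm (norm_powr_grad p u) = norm u powr (p - 1)"
  using powr_add[of "norm u" "p - 2" 1] by (cases "u = 0") (auto simp: norm_powr_grad_def)

lemma norm_norm_powr_grad_le:
  assumes "1 < p" and "norm u \<le> R"
  shows "norm (norm_powr_grad p u) \<le> R powr (p - 1)"
  using assms by (simp add: norm_norm_powr_grad powr_mono2)

lemma norm_powr_strong_convexity: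
  fixes u v :: "'a::real_inner" and p R :: real
  assumes p: "1 < p" "p \<le> 2" and u: "norm u \<le> R" and v: "norm v \<le> R"
  shows "norm u powr p + p * inner (norm_powr_grad p u) (v - u) + (p * (p - 1) * R powr (p - 2) / 2) * (norm (v - u))^2
           \<le> norm v powr p"
proof -
  define a where "a = norm u"
  define b where "b = norm v"
  define w where "w = inner u v"
  define c where "c = p * (p - 1) * R powr (p - 2) / 2"
  have scalar: "a powr p + p * a powr (p - 1) * (b - a) + c * (b - a)^2 \<le> b powr p"
    using powr_strong_convexity[OF p, of a R b] u v by (simp add: a_def b_def c_def)
  have dist_sq: "(norm (v - u))^2 = a^2 + b^2 - 2 * w"
    by (simp add: a_def b_def w_def power2_norm_eq_inner inner_diff_left inner_diff_right inner_commute)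
  have "w \<le> a * b" unfolding a_def b_def w_def by (rule norm_cauchy_schwarz)
  show ?thesis
  proof (cases "u = 0")
    case True
    then show ?thesis using scalar p by (simp add: a_def b_def c_def norm_powr_grad_def)
  next
    case False
    then have "0 < a" by (simp add: a_def)
    define X where "X = a powr (p - 2)"
    have a_powr: "a powr p = X * a^2" "a powr (p - 1) = X * a"
      using powr_add[of a "p - 2" 2] powr_add[of a "p - 2" 1] \<open>0 < a\<close> by (simp_all add: X_def powr_realpow)
    have "R powr (p - 2) \<le> X"
      using powr_mono2'[of "p - 2" a R] \<open>0 < a\<close> u p by (simp add: X_def a_def)
    then have "(p - 1) * R powr (p - 2) \<le> 1 * X"
      using p by (intro mult_mono) auto
    then have "2 * c \<le> p * X"
      using p by (simp add: c_def)
    then have "w * (p * X - 2 * c) \<le> a * b * (p * X - 2 * c)"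
      using \<open>w \<le> a * b\<close> by (simp add: mult_right_mono)
    moreover have "inner (norm_powr_grad p u) (v - u) = X * (w - a^2)"
      by (simp add: norm_powr_grad_def X_def a_def w_def inner_diff_right power2_norm_eq_inner algebra_simps)
    ultimately show ?thesis
      using scalar unfolding dist_sq a_powr a_def[symmetric] b_def[symmetric] c_def[symmetric]
      by (simp only:) (simp add: algebra_simps power2_eq_square)
  qed
qed

lemma norm_powr_grad_strongly_monotone:
  fixes u v :: "'a::real_inner" and p R :: real
  assumes p: "1 < p" "p \<le> 2" and u: "norm u \<le> R" and v: "norm v \<le> R"
  shows "(p - 1) * R powr (p - 2) * (norm (u - v))^2 \<le> inner (norm_powr_grad p u - norm_powr_grad p v) (u - v)"
proof -
  define c where "c = p * (p - 1) * R powr (p - 2) / 2"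
  have "norm u powr p + p * inner (norm_powr_grad p u) (v - u) + c * (norm (u - v))^2 \<le> norm v powr p"
    "norm v powr p + p * inner (norm_powr_grad p v) (u - v) + c * (norm (u - v))^2 \<le> norm u powr p"
    using norm_powr_strong_convexity[OF p u v] norm_powr_strong_convexity[OF p v u]
    by (simp_all add: c_def norm_minus_commute)
  moreover have "inner (norm_powr_grad p u - norm_powr_grad p v) (u - v)
      = - inner (norm_powr_grad p u) (v - u) - inner (norm_powr_grad p v) (u - v)"
    by (simp add: inner_diff_left inner_diff_right)
  ultimately have "2 * c * (norm (u - v))^2 \<le> p * inner (norm_powr_grad p u - norm_powr_grad p v) (u - v)"
    by (simp add: algebra_simps)
  then show ?thesis using p by (simp add: c_def)
qed

lemma norm_powr_convexity:
  fixes u v :: "'a::real_inner"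
  assumes p: "1 < p" "p \<le> 2"
  shows "norm u powr p + p * inner (norm_powr_grad p u) (v - u) \<le> norm v powr p"
proof -
  define R where "R = norm u + norm v"
  have R: "norm u \<le> R" "norm v \<le> R"
    using norm_ge_zero[of u] norm_ge_zero[of v] unfolding R_def by linarith+
  have "0 \<le> (p * (p - 1) * R powr (p - 2) / 2) * (norm (v - u))^2" using p by simp
  then show ?thesis using norm_powr_strong_convexity[OF p R] by linarith
qed

lemma norm_add_powr_le:
  fixes a b :: "'a::real_inner"
  assumes p: "1 < p" "p \<le> 2"
  shows "norm (a + b) powr p \<le> 2 powr (p - 1) * (norm a powr p + norm b powr p)"
proof -
  define m where "m = (1/2) *\<^sub>R (a + b)"
  have "a + b = m + m" by (simp add: m_def flip: scaleR_add_left)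
  then have "(a - m) + (b - m) = 0" by (simp add: algebra_simps)
  then have "inner (norm_powr_grad p m) (a - m) + inner (norm_powr_grad p m) (b - m) = 0"
    by (simp flip: inner_add_right)
  moreover have "2 * norm m powr p
      + p * (inner (norm_powr_grad p m) (a - m) + inner (norm_powr_grad p m) (b - m))
      \<le> norm a powr p + norm b powr p"
    using norm_powr_convexity[OF p, of m a] norm_powr_convexity[OF p, of m b]
    by (simp only: distrib_left)
  ultimately have "2 * norm m powr p \<le> norm a powr p + norm b powr p" by simp
  moreover have "norm (a + b) powr p = 2 powr (p - 1) * (2 * norm m powr p)"
  proof -
    have "norm (a + b) = 2 * norm m" by (simp add: m_def)
    then have "norm (a + b) powr p = 2 powr p * norm m powr p" by (simp add: powr_mult)
    also have "2 powr p = 2 powr (p - 1) * 2" using powr_add[of 2 "p - 1" 1] by simp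
    finally show ?thesis by simp
  qed
  ultimately show ?thesis by simp
qed

lemma isCont_norm_powr_grad:
  fixes u :: "'a::real_inner"
  assumes p: "1 < p"
  shows "isCont (norm_powr_grad p) u"
proof (cases "u = 0")
  case False
  then show ?thesis unfolding norm_powr_grad_def by (intro continuous_intros) auto
next
  case True
  have "((\<lambda>w. norm w powr (p - 1)) \<longlongrightarrow> 0) (at (0::'a))"
    using p by (intro tendsto_zero_powrI[OF tendsto_norm_zero[OF tendsto_ident_at]]) auto
  then have "((\<lambda>w. norm (norm_powr_grad p w)) \<longlongrightarrow> 0) (at (0::'a))"
    by (simp add: norm_norm_powr_grad)
  then have "(norm_powr_grad p \<longlongrightarrow> 0) (at (0::'a))"
    by (rule tendsto_norm_zero_cancel)
  then show ?thesis using True by (simp add: isCont_def norm_powr_grad_def)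
qed

section \<open>Lower semicontinuity and minimizers\<close>

lemma lsc_open_superlevel:
  fixes \<phi> :: "'a::metric_space \<Rightarrow> ereal"
  assumes "lsc \<phi>"
  shows "open {y. c < \<phi> y}"
proof (rule openI)
  fix y0 assume "y0 \<in> {y. c < \<phi> y}"
  then have "c < (SUP e\<in>{0<..}. INF y\<in>ball y0 e. \<phi> y)"
    using assms min_Liminf_at[of \<phi> y0] by (simp add: lsc_def min_def)
  then obtain e where "e > 0" "c < (INF y\<in>ball y0 e. \<phi> y)"
    by (auto simp: less_SUP_iff)
  then show "\<exists>e>0. ball y0 e \<subseteq> {y. c < \<phi> y}"
    by (auto dest: less_INF_D)
qed

lemma lsc_add_continuous_open_superlevel:
  fixes \<phi> :: "'a::metric_space \<Rightarrow> ereal"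
  assumes "lsc \<phi>" and "continuous_on UNIV h"
  shows "open {y. ereal t < \<phi> y + ereal (h y)}"
proof -
  have "{y. ereal t < \<phi> y + ereal (h y)} = (\<Union>s. {y. ereal s < \<phi> y} \<inter> {y. t - s < h y})"
  proof (intro set_eqI iffI)
    fix y assume "y \<in> {y. ereal t < \<phi> y + ereal (h y)}"
    then have "\<exists>s. ereal s < \<phi> y \<and> t - s < h y"
    proof (cases "\<phi> y")
      case (real r)
      then show ?thesis using \<open>y \<in> _\<close> by (intro exI[of _ "(r + t - h y) / 2"]) (auto simp: field_simps)
    qed (auto intro: exI[of _ "t - h y + 1"])
    then show "y \<in> (\<Union>s. {y. ereal s < \<phi> y} \<inter> {y. t - s < h y})" by blast
  next
    fix y assume "y \<in> (\<Union>s. {y. ereal s < \<phi> y} \<inter> {y. t - s < h y})"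
    then obtain s where "ereal s < \<phi> y" "t - s < h y" by blast
    then show "y \<in> {y. ereal t < \<phi> y + ereal (h y)}" by (cases "\<phi> y") auto
  qed
  moreover have "open {y. t - s < h y}" for s
    using assms(2) by (intro open_Collect_less continuous_intros)
  ultimately show ?thesis
    using lsc_open_superlevel[OF assms(1)] by (auto intro!: open_Union open_Int)
qed

lemma ereal_attains_min:
  fixes f :: "'a::heine_borel \<Rightarrow> ereal"
  assumes closed: "\<And>t. closed {y. f y \<le> ereal t}" and bounded: "\<And>t. bounded {y. f y \<le> ereal t}"
    and below: "\<And>y. ereal c \<le> f y" and not_top: "f a \<noteq> \<infinity>"
  shows "\<exists>y. \<forall>z. f y \<le> f z"
proof -
  define m where "m = (INF y. f y)"
  have "ereal c \<le> m" "m \<le> f a"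
    using below by (auto simp: m_def intro: INF_greatest INF_lower)
  then obtain m0 where m0: "m = ereal m0" using not_top by (cases m) auto
  define S where "S n = {y. f y \<le> ereal (m0 + inverse (Suc n))}" for n :: nat
  have "\<Inter>(range S) \<noteq> {}"
  proof (rule compact_nest)
    show "compact (S n)" for n
      using closed bounded by (simp add: S_def compact_eq_bounded_closed)
    show "S n \<noteq> {}" for n
    proof -
      have "m < ereal (m0 + inverse (Suc n))"
        using m0 by simp
      then obtain y where "f y < ereal (m0 + inverse (Suc n))"
        by (auto simp: m_def INF_less_iff)
      then show ?thesis by (auto simp: S_def intro: less_imp_le)
    qed
    show "S n \<subseteq> S k" if "k \<le> n" for k n
      using that by (auto simp: S_def elim!: order_trans intro!: divide_left_mono)
  qed
  then obtain y where y: "\<And>n. f y \<le> ereal (m0 + inverse (Suc n))"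
    by (auto simp: S_def)
  then obtain r where r: "f y = ereal r"
    using below[of y] by (cases "f y") (auto dest: spec[of _ 0])
  have "r \<le> m0"
    using y r by (intro LIMSEQ_le_const[OF LIMSEQ_inverse_real_of_nat_add]) auto
  then have "f y \<le> m"
    using r m0 by simp
  then show ?thesis
    unfolding m_def by (metis INF_lower UNIV_I order_trans)
qed

section \<open>Proximal mapping and Moreau envelope\<close>

definition prox_objective :: "real \<Rightarrow> real \<Rightarrow> ('a::real_normed_vector \<Rightarrow> ereal) \<Rightarrow> 'a \<Rightarrow> 'a \<Rightarrow> ereal" where
  "prox_objective p \<gamma> \<phi> x y = \<phi> y + ereal (norm (x - y) powr p / (p * \<gamma>))"

lemma mem_prox_iff: "y \<in> prox p \<gamma> \<phi> x \<longleftrightarrow> (\<forall>z. prox_objective p \<gamma> \<phi> x y \<le> prox_objective p \<gamma> \<phi> x z)"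
  by (simp add: prox_def prox_objective_def)

lemma moreau_env_eq_INF: "moreau_env p \<gamma> \<phi> x = (INF y. prox_objective p \<gamma> \<phi> x y)"
  by (simp add: moreau_env_def prox_objective_def)

lemma moreau_env_eq_prox_objective:
  assumes "y \<in> prox p \<gamma> \<phi> x"
  shows "moreau_env p \<gamma> \<phi> x = prox_objective p \<gamma> \<phi> x y"
  using assms unfolding moreau_env_eq_INF mem_prox_iff by (intro antisym INF_lower INF_greatest) auto

lemma prox_subgradient_ineq:
  fixes \<phi> :: "'a::real_inner \<Rightarrow> ereal"
  assumes p: "1 < p" "p \<le> 2" and \<gamma>: "0 < \<gamma>" and y: "y \<in> prox p \<gamma> \<phi> x" and fin: "\<bar>\<phi> y\<bar> \<noteq> \<infinity>"
  shows "\<phi> y + ereal (inner (norm_powr_grad p (x - z)) (z - y) / \<gamma>) \<le> \<phi> z"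
proof -
  define fy fz where "fy = norm (x - y) powr p / (p * \<gamma>)" and "fz = norm (x - z) powr p / (p * \<gamma>)"
  have min: "\<phi> y + ereal fy \<le> \<phi> z + ereal fz"
    using y by (simp add: mem_prox_iff prox_objective_def fy_def fz_def)
  have "norm (x - z) powr p + p * inner (norm_powr_grad p (x - z)) (z - y) \<le> norm (x - y) powr p"
    using norm_powr_convexity[OF p, of "x - z" "x - y"] by simp
  then have "(norm (x - z) powr p + p * inner (norm_powr_grad p (x - z)) (z - y)) / (p * \<gamma>) \<le> fy"
    using p \<gamma> unfolding fy_def by (intro divide_right_mono) auto
  then have "fz + inner (norm_powr_grad p (x - z)) (z - y) / \<gamma> \<le> fy"
    using p by (simp add: fz_def add_divide_distrib)
  with min fin show ?thesis
    by (cases "\<phi> y"; cases "\<phi> z") auto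
qed

lemma prox_frechet_subgradient:
  fixes \<phi> :: "'a::real_inner \<Rightarrow> ereal"
  assumes p: "1 < p" "p \<le> 2" and \<gamma>: "0 < \<gamma>" and y: "y \<in> prox p \<gamma> \<phi> x" and fin: "\<bar>\<phi> y\<bar> \<noteq> \<infinity>"
  shows "(1/\<gamma>) *\<^sub>R norm_powr_grad p (x - y) \<in> frechet_subdiff \<phi> y"
  unfolding frechet_subdiff_def
proof (intro CollectI conjI fin allI impI)
  fix e :: real assume "e > 0"
  have "isCont (\<lambda>z. norm_powr_grad p (x - z)) y"
    by (rule isCont_o2[OF _ isCont_norm_powr_grad[OF p(1)]]) (intro continuous_intros)
  then obtain d where "d > 0" and d: "\<And>z. dist z y < d \<Longrightarrow> dist (norm_powr_grad p (x - z)) (norm_powr_grad p (x - y)) < e * \<gamma>"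
    using \<open>e > 0\<close> \<gamma> unfolding continuous_at_eps_delta by (metis mult_pos_pos)
  have "\<phi> y + ereal (inner ((1/\<gamma>) *\<^sub>R norm_powr_grad p (x - y)) (z - y) - e * norm (z - y)) \<le> \<phi> z"
    if "norm (z - y) < d" for z
  proof -
    define A where "A = norm_powr_grad p (x - y) - norm_powr_grad p (x - z)"
    have "norm A \<le> e * \<gamma>"
      using d[of z] that by (simp add: A_def dist_norm norm_minus_commute)
    then have "inner A (z - y) \<le> e * \<gamma> * norm (z - y)"
      using norm_cauchy_schwarz[of A "z - y"] mult_right_mono[OF \<open>norm A \<le> e * \<gamma>\<close> norm_ge_zero[of "z - y"]]
      by linarith
    then have "inner A (z - y) / \<gamma> \<le> e * norm (z - y)"
      using \<gamma> by (simp add: pos_divide_le_eq mult_ac)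
    then have "inner ((1/\<gamma>) *\<^sub>R norm_powr_grad p (x - y)) (z - y) - e * norm (z - y)
        \<le> inner (norm_powr_grad p (x - z)) (z - y) / \<gamma>"
      by (simp add: A_def inner_diff_left diff_divide_distrib)
    then have "\<phi> y + ereal (inner ((1/\<gamma>) *\<^sub>R norm_powr_grad p (x - y)) (z - y) - e * norm (z - y))
        \<le> \<phi> y + ereal (inner (norm_powr_grad p (x - z)) (z - y) / \<gamma>)"
      by (intro add_left_mono) simp
    then show ?thesis
      using prox_subgradient_ineq[OF p \<gamma> y fin, of z] by (rule order_trans)
  qed
  then show "\<exists>d>0. \<forall>z. norm (z - y) < d \<longrightarrow>
      \<phi> y + ereal (inner ((1/\<gamma>) *\<^sub>R norm_powr_grad p (x - y)) (z - y) - e * norm (z - y)) \<le> \<phi> z"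
    using \<open>d > 0\<close> by blast
qed

lemma frechet_subdiff_subset_limiting_subdiff: "frechet_subdiff \<phi> x \<subseteq> limiting_subdiff \<phi> x"
  unfolding limiting_subdiff_def
proof (intro subsetI CollectI conjI)
  fix \<zeta> assume "\<zeta> \<in> frechet_subdiff \<phi> x"
  then show "\<bar>\<phi> x\<bar> \<noteq> \<infinity>" by (simp add: frechet_subdiff_def)
  show "\<exists>xs zs. xs \<longlonglongrightarrow> x \<and> (\<lambda>k. \<phi> (xs k)) \<longlonglongrightarrow> \<phi> x \<and> zs \<longlonglongrightarrow> \<zeta> \<and> (\<forall>k. zs k \<in> frechet_subdiff \<phi> (xs k))"
    using \<open>\<zeta> \<in> frechet_subdiff \<phi> x\<close> by (intro exI[of _ "\<lambda>_. x"] exI[of _ "\<lambda>_. \<zeta>"]) auto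
qed

lemma moreau_env_le_linearization:
  fixes \<phi> :: "'a::real_inner \<Rightarrow> ereal"
  assumes p: "1 < p" "p \<le> 2" and \<gamma>: "0 < \<gamma>" and y: "y \<in> prox p \<gamma> \<phi> x" and fin: "\<bar>\<phi> y\<bar> \<noteq> \<infinity>"
  shows "moreau_env p \<gamma> \<phi> x' \<le> moreau_env p \<gamma> \<phi> x + ereal (inner (norm_powr_grad p (x' - y)) (x' - x) / \<gamma>)"
proof -
  have "norm (x' - y) powr p + p * inner (norm_powr_grad p (x' - y)) (x - x') \<le> norm (x - y) powr p"
    using norm_powr_convexity[OF p, of "x' - y" "x - y"] by simp
  then have "(norm (x' - y) powr p - p * inner (norm_powr_grad p (x' - y)) (x' - x)) / (p * \<gamma>)
      \<le> norm (x - y) powr p / (p * \<gamma>)"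
    using p \<gamma> by (intro divide_right_mono) (auto simp: inner_diff_right algebra_simps)
  then have "norm (x' - y) powr p / (p * \<gamma>)
      \<le> norm (x - y) powr p / (p * \<gamma>) + inner (norm_powr_grad p (x' - y)) (x' - x) / \<gamma>"
    using p by (simp add: diff_divide_distrib)
  obtain r where r: "\<phi> y = ereal r" using fin by (cases "\<phi> y") auto
  have "moreau_env p \<gamma> \<phi> x' \<le> prox_objective p \<gamma> \<phi> x' y"
    unfolding moreau_env_eq_INF by (rule INF_lower) simp
  also have "\<dots> \<le> ereal (r + norm (x - y) powr p / (p * \<gamma>) + inner (norm_powr_grad p (x' - y)) (x' - x) / \<gamma>)"
    using \<open>norm (x' - y) powr p / (p * \<gamma>) \<le> _\<close> r by (simp add: prox_objective_def)
  also have "\<dots> = moreau_env p \<gamma> \<phi> x + ereal (inner (norm_powr_grad p (x' - y)) (x' - x) / \<gamma>)"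
    using r by (simp add: moreau_env_eq_prox_objective[OF y] prox_objective_def)
  finally show ?thesis .
qed

lemma has_derivative_inner_squeeze:
  fixes f :: "'a::real_inner \<Rightarrow> real"
  assumes e: "(e \<longlongrightarrow> 0) (at x)"
    and bound: "\<forall>\<^sub>F x' in at x. \<bar>f x' - f x - inner g (x' - x)\<bar> \<le> e x' * norm (x' - x)"
  shows "(f has_derivative (\<lambda>h. inner g h)) (at x)"
  unfolding has_derivative_iff_norm
proof (intro conjI bounded_linear_inner_right Lim_null_comparison[OF _ e])
  show "\<forall>\<^sub>F x' in at x. norm (norm (f x' - f x - inner g (x' - x)) / norm (x' - x)) \<le> e x'"
    using bound eventually_neq_at_within[of x x UNIV]
  proof eventually_elim
    case (elim x')
    then show ?case by (simp add: divide_le_eq)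
  qed
qed

lemma moreau_env_real_bounds:
  fixes \<phi> :: "'a::real_inner \<Rightarrow> ereal"
  assumes p: "1 < p" "p \<le> 2" and \<gamma>: "0 < \<gamma>"
    and y: "y \<in> prox p \<gamma> \<phi> x" "\<bar>\<phi> y\<bar> \<noteq> \<infinity>" and y': "y' \<in> prox p \<gamma> \<phi> x'" "\<bar>\<phi> y'\<bar> \<noteq> \<infinity>"
  shows "inner (norm_powr_grad p (x - y')) (x' - x) / \<gamma>
      \<le> real_of_ereal (moreau_env p \<gamma> \<phi> x') - real_of_ereal (moreau_env p \<gamma> \<phi> x)"
    and "real_of_ereal (moreau_env p \<gamma> \<phi> x') - real_of_ereal (moreau_env p \<gamma> \<phi> x)
      \<le> inner (norm_powr_grad p (x' - y)) (x' - x) / \<gamma>"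
proof -
  have finite: "\<bar>moreau_env p \<gamma> \<phi> z\<bar> \<noteq> \<infinity>" if "w \<in> prox p \<gamma> \<phi> z" "\<bar>\<phi> w\<bar> \<noteq> \<infinity>" for w z
    using that by (cases "\<phi> w") (auto simp: moreau_env_eq_prox_objective prox_objective_def)
  have "inner (norm_powr_grad p (x - y')) (x - x') = - inner (norm_powr_grad p (x - y')) (x' - x)"
    by (simp add: inner_diff_right)
  then show "inner (norm_powr_grad p (x - y')) (x' - x) / \<gamma>
      \<le> real_of_ereal (moreau_env p \<gamma> \<phi> x') - real_of_ereal (moreau_env p \<gamma> \<phi> x)"
    using moreau_env_le_linearization[OF p \<gamma> y', of x] finite[OF y] finite[OF y']
    by (cases "moreau_env p \<gamma> \<phi> x"; cases "moreau_env p \<gamma> \<phi> x'") auto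
  show "real_of_ereal (moreau_env p \<gamma> \<phi> x') - real_of_ereal (moreau_env p \<gamma> \<phi> x)
      \<le> inner (norm_powr_grad p (x' - y)) (x' - x) / \<gamma>"
    using moreau_env_le_linearization[OF p \<gamma> y, of x'] finite[OF y] finite[OF y']
    by (cases "moreau_env p \<gamma> \<phi> x"; cases "moreau_env p \<gamma> \<phi> x'") auto
qed

lemma moreau_env_has_derivative:
  fixes \<phi> :: "'a::real_inner \<Rightarrow> ereal"
  assumes p: "1 < p" "p \<le> 2" and \<gamma>: "0 < \<gamma>" and U: "open U" and P: "continuous_on U P"
    and prox: "\<And>x. x \<in> U \<Longrightarrow> P x \<in> prox p \<gamma> \<phi> x"
    and fin: "\<And>x. x \<in> U \<Longrightarrow> \<bar>\<phi> (P x)\<bar> \<noteq> \<infinity>"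
    and x: "x \<in> U"
  shows "((\<lambda>x. real_of_ereal (moreau_env p \<gamma> \<phi> x))
    has_derivative (\<lambda>h. inner ((1/\<gamma>) *\<^sub>R norm_powr_grad p (x - P x)) h)) (at x)"
proof (rule has_derivative_inner_squeeze)
  define F where "F x = real_of_ereal (moreau_env p \<gamma> \<phi> x)" for x
  define A where "A x' = norm_powr_grad p (x' - P x) - norm_powr_grad p (x - P x)" for x'
  define B where "B x' = norm_powr_grad p (x - P x') - norm_powr_grad p (x - P x)" for x'
  have "isCont P x"
    using P U x continuous_on_eq_continuous_at by blast
  have "isCont (\<lambda>x'. norm_powr_grad p (x' - P x)) x" "isCont (\<lambda>x'. norm_powr_grad p (x - P x')) x"
    by (rule isCont_o2[OF _ isCont_norm_powr_grad[OF p(1)]], intro continuous_intros \<open>isCont P x\<close>)+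
  then have "isCont (\<lambda>x'. (norm (A x') + norm (B x')) / \<gamma>) x"
    unfolding A_def B_def using \<gamma> by (intro continuous_intros) auto
  then show "((\<lambda>x'. (norm (A x') + norm (B x')) / \<gamma>) \<longlongrightarrow> 0) (at x)"
    by (simp add: isCont_def A_def B_def)
  show "\<forall>\<^sub>F x' in at x. \<bar>F x' - F x - inner ((1/\<gamma>) *\<^sub>R norm_powr_grad p (x - P x)) (x' - x)\<bar>
      \<le> (norm (A x') + norm (B x')) / \<gamma> * norm (x' - x)"
    using eventually_at_in_open'[OF U x]
  proof eventually_elim
    case (elim x')
    define h where "h = x' - x"
    define D where "D = F x' - F x - inner ((1/\<gamma>) *\<^sub>R norm_powr_grad p (x - P x)) h"
    have "inner (B x') h / \<gamma> \<le> D" "D \<le> inner (A x') h / \<gamma>"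
      using moreau_env_real_bounds[OF p \<gamma> prox[OF x] fin[OF x] prox[OF elim] fin[OF elim]]
      by (simp_all add: D_def F_def h_def A_def B_def inner_diff_left diff_divide_distrib)
    moreover have "inner (A x') h / \<gamma> \<le> norm (A x') * norm h / \<gamma>"
      "- inner (B x') h / \<gamma> \<le> norm (B x') * norm h / \<gamma>"
      using Cauchy_Schwarz_ineq2[of "A x'" h] Cauchy_Schwarz_ineq2[of "B x'" h] \<gamma>
      by (intro divide_right_mono; linarith)+
    moreover have "0 \<le> norm (A x') * norm h / \<gamma>" "0 \<le> norm (B x') * norm h / \<gamma>"
      using \<gamma> by simp_all
    ultimately have "\<bar>D\<bar> \<le> norm (A x') * norm h / \<gamma> + norm (B x') * norm h / \<gamma>"
      unfolding abs_le_iff by (simp add: minus_divide_left[symmetric])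
    then show ?case
      by (simp add: D_def h_def add_divide_distrib algebra_simps)
  qed
qed

lemma moreau_env_C1_on:
  fixes \<phi> :: "'a::real_inner \<Rightarrow> ereal"
  assumes p: "1 < p" "p \<le> 2" and \<gamma>: "0 < \<gamma>" and U: "open U" and P: "continuous_on U P"
    and prox: "\<And>x. x \<in> U \<Longrightarrow> P x \<in> prox p \<gamma> \<phi> x"
    and fin: "\<And>x. x \<in> U \<Longrightarrow> \<bar>\<phi> (P x)\<bar> \<noteq> \<infinity>"
  shows "C1_on U (moreau_env p \<gamma> \<phi>)"
  unfolding C1_on_def
proof (intro exI conjI ballI)
  fix x assume x: "x \<in> U"
  show "moreau_env p \<gamma> \<phi> x = ereal (real_of_ereal (moreau_env p \<gamma> \<phi> x))"
    using fin[OF x] unfolding moreau_env_eq_prox_objective[OF prox[OF x]] prox_objective_def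
    by (cases "\<phi> (P x)") auto
  show "((\<lambda>x. real_of_ereal (moreau_env p \<gamma> \<phi> x))
      has_derivative (\<lambda>h. inner ((1/\<gamma>) *\<^sub>R norm_powr_grad p (x - P x)) h)) (at x)"
    by (rule moreau_env_has_derivative[OF p \<gamma> U P prox fin x])
next
  have "isCont (\<lambda>x. (1/\<gamma>) *\<^sub>R norm_powr_grad p (x - P x)) x" if "x \<in> U" for x
  proof -
    have "isCont P x"
      using P U that continuous_on_eq_continuous_at by blast
    have "isCont (\<lambda>x. norm_powr_grad p (x - P x)) x"
      by (rule isCont_o2[OF _ isCont_norm_powr_grad[OF p(1)]]) (intro continuous_intros \<open>isCont P x\<close>)
    then show ?thesis by (intro continuous_intros)
  qed
  then show "continuous_on U (\<lambda>x. (1/\<gamma>) *\<^sub>R norm_powr_grad p (x - P x))"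
    by (simp add: continuous_on_eq_continuous_at[OF U])
qed

section \<open>Calmness and prox-regularity\<close>

lemma p_calm_lower_bound:
  assumes calm: "p_calm p \<phi> 0 M" and "\<phi> 0 = 0" and "\<phi> y \<noteq> -\<infinity>"
  shows "ereal (- M * norm y powr p) \<le> \<phi> y"
proof (cases "y = 0")
  case False
  then have "0 < \<phi> y + ereal (M * norm y powr p)"
    using calm \<open>\<phi> 0 = 0\<close> by (simp add: p_calm_def)
  then show ?thesis
    using \<open>\<phi> y \<noteq> -\<infinity>\<close> by (cases "\<phi> y") auto
qed (simp add: \<open>\<phi> 0 = 0\<close>)

lemma q_prox_regular_hypomonotone:
  assumes preg: "q_prox_regular q \<phi> xb \<zeta>b \<epsilon> \<rho>"
    and y1: "y1 \<in> cball xb \<epsilon>" "\<zeta>1 \<in> limiting_subdiff \<phi> y1 \<inter> cball \<zeta>b \<epsilon>" "\<phi> y1 < \<phi> xb + ereal \<epsilon>"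
    and y2: "y2 \<in> cball xb \<epsilon>" "\<zeta>2 \<in> limiting_subdiff \<phi> y2 \<inter> cball \<zeta>b \<epsilon>" "\<phi> y2 < \<phi> xb + ereal \<epsilon>"
  shows "- \<rho> * norm (y1 - y2) powr q \<le> inner (\<zeta>1 - \<zeta>2) (y1 - y2)"
proof -
  have "\<phi> y1 + ereal (inner \<zeta>1 (y2 - y1) - \<rho> / 2 * norm (y2 - y1) powr q) \<le> \<phi> y2"
    "\<phi> y2 + ereal (inner \<zeta>2 (y1 - y2) - \<rho> / 2 * norm (y1 - y2) powr q) \<le> \<phi> y1"
    using preg y1 y2 unfolding q_prox_regular_def by blast+
  moreover have "\<bar>\<phi> y1\<bar> \<noteq> \<infinity>" "\<bar>\<phi> y2\<bar> \<noteq> \<infinity>"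
    using y1(2) y2(2) by (auto simp: limiting_subdiff_def)
  ultimately show ?thesis
    by (cases "\<phi> y1"; cases "\<phi> y2") (auto simp: norm_minus_commute inner_diff_left inner_diff_right algebra_simps)
qed

lemma tendsto_scaled_powr_at_right_0:
  fixes a c :: real
  assumes "0 < a" "0 \<le> c"
  shows "((\<lambda>d. (c * d) powr a) \<longlongrightarrow> 0) (at_right 0)"
proof (rule tendsto_zero_powrI[OF _ tendsto_const _ \<open>0 < a\<close>])
  have "((\<lambda>d::real. c * d) \<longlongrightarrow> c * 0) (at_right 0)"
    by (intro tendsto_intros)
  then show "((\<lambda>d::real. c * d) \<longlongrightarrow> 0) (at_right 0)" by simp
  show "\<forall>\<^sub>F d in at_right 0. 0 \<le> c * d"
    using eventually_at_right_less[of "0::real"] by eventually_elim (use \<open>0 \<le> c\<close> in simp)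
qed

section \<open>Proximal points near a calm point\<close>

locale calm_prox =
  fixes \<phi> :: "'a::euclidean_space \<Rightarrow> ereal" and p M \<gamma> :: real
  assumes p: "1 < p" "p \<le> 2" and not_minf: "\<And>x. \<phi> x \<noteq> -\<infinity>" and lsc: "lsc \<phi>"
    and calm: "p_calm p \<phi> 0 M" and phi0: "\<phi> 0 = 0"
    and gamma: "0 < \<gamma>" "M * p * \<gamma> < 2 powr (1 - p)"
begin

definition \<kappa> where "\<kappa> = 2 powr (1 - p) / (p * \<gamma>) - M"

lemma kappa_pos: "0 < \<kappa>"
  using gamma p by (simp add: \<kappa>_def field_simps)

lemma prox_objective_lower_bound:
  "ereal (\<kappa> * norm y powr p - norm x powr p / (p * \<gamma>)) \<le> prox_objective p \<gamma> \<phi> x y"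
proof -
  have "norm y powr p \<le> 2 powr (p - 1) * (norm (x - y) powr p + norm x powr p)"
    using norm_add_powr_le[OF p, of "y - x" x] by (simp add: norm_minus_commute)
  then have "2 powr (1 - p) * norm y powr p \<le> norm (x - y) powr p + norm x powr p"
    by (simp add: powr_diff powr_minus_divide field_simps)
  then have "(2 powr (1 - p) * norm y powr p - norm x powr p) / (p * \<gamma>) \<le> norm (x - y) powr p / (p * \<gamma>)"
    using p gamma by (intro divide_right_mono) auto
  then have "ereal (\<kappa> * norm y powr p - norm x powr p / (p * \<gamma>))
      \<le> ereal (- M * norm y powr p) + ereal (norm (x - y) powr p / (p * \<gamma>))"
    by (simp add: \<kappa>_def diff_divide_distrib algebra_simps)
  also have "\<dots> \<le> prox_objective p \<gamma> \<phi> x y"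
    unfolding prox_objective_def
    by (intro add_right_mono p_calm_lower_bound[OF calm phi0 not_minf])
  finally show ?thesis .
qed

lemma prox_objective_at_0: "prox_objective p \<gamma> \<phi> x 0 = ereal (norm x powr p / (p * \<gamma>))"
  by (simp add: prox_objective_def phi0)

lemma closed_prox_objective_sublevel: "closed {y. prox_objective p \<gamma> \<phi> x y \<le> ereal t}"
proof -
  have "isCont (\<lambda>y. norm (x - y) powr p / (p * \<gamma>)) y" for y
    unfolding isCont_def using p gamma by (auto intro!: tendsto_intros)
  then have "continuous_on UNIV (\<lambda>y. norm (x - y) powr p / (p * \<gamma>))"
    by (simp add: continuous_on_eq_continuous_at)
  then have "open {y. ereal t < prox_objective p \<gamma> \<phi> x y}"
    unfolding prox_objective_def by (rule lsc_add_continuous_open_superlevel[OF lsc])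
  then show ?thesis
    by (simp add: closed_def Collect_neg_eq[symmetric] not_le)
qed

lemma bounded_prox_objective_sublevel: "bounded {y. prox_objective p \<gamma> \<phi> x y \<le> ereal t}"
  unfolding bounded_iff
proof (intro exI ballI)
  fix y assume "y \<in> {y. prox_objective p \<gamma> \<phi> x y \<le> ereal t}"
  then have "prox_objective p \<gamma> \<phi> x y \<le> ereal t" by simp
  with prox_objective_lower_bound[of y x]
  have "ereal (\<kappa> * norm y powr p - norm x powr p / (p * \<gamma>)) \<le> ereal t"
    by (rule order_trans)
  then have "norm y powr p \<le> (t + norm x powr p / (p * \<gamma>)) / \<kappa>"
    using kappa_pos by (simp add: field_simps)
  moreover have "norm y \<le> 1 + norm y powr p"
  proof (cases "1 \<le> norm y")
    case True
    then show ?thesis using powr_mono[of 1 p "norm y"] p by simp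
  next
    case False
    then show ?thesis using powr_ge_zero[of "norm y" p] by linarith
  qed
  ultimately show "norm y \<le> 1 + (t + norm x powr p / (p * \<gamma>)) / \<kappa>"
    by linarith
qed

lemma prox_nonempty: "prox p \<gamma> \<phi> x \<noteq> {}"
proof -
  have "ereal (- (norm x powr p / (p * \<gamma>))) \<le> prox_objective p \<gamma> \<phi> x y" for y
  proof -
    have "ereal (- (norm x powr p / (p * \<gamma>))) \<le> ereal (\<kappa> * norm y powr p - norm x powr p / (p * \<gamma>))"
      using kappa_pos by simp
    also have "\<dots> \<le> prox_objective p \<gamma> \<phi> x y"
      by (rule prox_objective_lower_bound)
    finally show ?thesis .
  qed
  then have "\<exists>y. \<forall>z. prox_objective p \<gamma> \<phi> x y \<le> prox_objective p \<gamma> \<phi> x z"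
    by (intro ereal_attains_min[where a = 0] closed_prox_objective_sublevel bounded_prox_objective_sublevel)
      (simp_all add: prox_objective_at_0)
  then show ?thesis
    by (metis empty_iff mem_prox_iff)
qed

definition C where "C = (2 / (\<kappa> * p * \<gamma>)) powr (1 / p)"

lemma C_pos: "0 < C"
  using kappa_pos p gamma by (simp add: C_def)

lemma prox_bounds:
  assumes y: "y \<in> prox p \<gamma> \<phi> x"
  shows "\<phi> y \<le> ereal (norm x powr p / (p * \<gamma>))" and "\<bar>\<phi> y\<bar> \<noteq> \<infinity>" and "norm y \<le> C * norm x"
proof -
  have min: "prox_objective p \<gamma> \<phi> x y \<le> ereal (norm x powr p / (p * \<gamma>))"
    using y by (auto simp: mem_prox_iff prox_objective_at_0[symmetric])
  moreover have "\<phi> y \<le> prox_objective p \<gamma> \<phi> x y"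
    unfolding prox_objective_def using p gamma by (intro ereal_le_add_self) simp
  ultimately show "\<phi> y \<le> ereal (norm x powr p / (p * \<gamma>))"
    by (rule order_trans[rotated])
  then show "\<bar>\<phi> y\<bar> \<noteq> \<infinity>"
    using not_minf[of y] by auto
  have "\<kappa> * norm y powr p \<le> 2 * (norm x powr p / (p * \<gamma>))"
    using order_trans[OF prox_objective_lower_bound min] by simp
  then have "norm y powr p \<le> 2 / (\<kappa> * p * \<gamma>) * norm x powr p"
    using kappa_pos p gamma by (simp add: field_simps)
  then have "(norm y powr p) powr (1 / p) \<le> (2 / (\<kappa> * p * \<gamma>) * norm x powr p) powr (1 / p)"
    using p by (intro powr_mono2) auto
  moreover have "(2 / (\<kappa> * p * \<gamma>) * norm x powr p) powr (1 / p) = C * (norm x powr p) powr (1 / p)"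
    unfolding C_def using kappa_pos p gamma by (intro powr_mult)
  ultimately show "norm y \<le> C * norm x"
    using p by (simp add: powr_powr)
qed

lemma eventually_hypomonotonicity_dominated:
  assumes "p = 2 \<Longrightarrow> \<rho> * \<gamma> < 1"
  shows "\<forall>\<^sub>F d in at_right 0. \<rho> * \<gamma> < (p - 1) * ((1 + C) * d) powr (p - 2)"
proof (cases "p = 2")
  case True
  show ?thesis using eventually_at_right_less[of "0::real"]
    by eventually_elim (use True assms C_pos in \<open>simp add: mult.commute\<close>)
next
  case False
  have "((\<lambda>d. \<rho> * \<gamma> * ((1 + C) * d) powr (2 - p)) \<longlongrightarrow> \<rho> * \<gamma> * 0) (at_right 0)"
    using False p C_pos by (intro tendsto_intros tendsto_scaled_powr_at_right_0) auto
  then have "\<forall>\<^sub>F d in at_right 0. \<rho> * \<gamma> * ((1 + C) * d) powr (2 - p) < p - 1"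
    using p by (intro order_tendstoD(2)) auto
  with eventually_at_right_less[of "0::real"] show ?thesis
  proof eventually_elim
    case (elim d)
    define X where "X = ((1 + C) * d) powr (2 - p)"
    have "0 < X" using elim C_pos by (simp add: X_def)
    have "((1 + C) * d) powr (p - 2) = 1 / X"
      using powr_minus_divide[of "(1 + C) * d" "2 - p"] by (simp add: X_def)
    moreover have "\<rho> * \<gamma> < (p - 1) / X"
      using elim \<open>0 < X\<close> by (simp add: X_def pos_less_divide_eq)
    ultimately show ?case
      by simp
  qed
qed

lemma exists_local_radius:
  assumes "0 < \<epsilon>" and "p = 2 \<Longrightarrow> \<rho> * \<gamma> < 1"
  shows "\<exists>\<delta>>0. C * \<delta> \<le> min \<epsilon> (1/2) \<and> \<delta> powr p / (p * \<gamma>) < \<epsilon> \<and>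
    ((1 + C) * \<delta>) powr (p - 1) / \<gamma> \<le> \<epsilon> \<and> \<rho> * \<gamma> < (p - 1) * ((1 + C) * \<delta>) powr (p - 2)"
proof -
  have large_modulus: "\<forall>\<^sub>F d in at_right 0. \<rho> * \<gamma> < (p - 1) * ((1 + C) * d) powr (p - 2)"
    using assms(2) by (rule eventually_hypomonotonicity_dominated)
  have "((\<lambda>d. C * d) \<longlongrightarrow> C * 0) (at_right 0)"
    by (intro tendsto_intros)
  then have "\<forall>\<^sub>F d in at_right 0. C * d < min \<epsilon> (1/2)"
    using assms(1) by (intro order_tendstoD(2)) auto
  moreover have "((\<lambda>d. (1 * d) powr p / (p * \<gamma>)) \<longlongrightarrow> 0 / (p * \<gamma>)) (at_right 0)"
    using p gamma by (intro tendsto_divide tendsto_scaled_powr_at_right_0) auto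
  then have "\<forall>\<^sub>F d in at_right 0. d powr p / (p * \<gamma>) < \<epsilon>"
    using assms(1) by (auto dest: order_tendstoD(2))
  moreover have "((\<lambda>d. ((1 + C) * d) powr (p - 1) / \<gamma>) \<longlongrightarrow> 0 / \<gamma>) (at_right 0)"
    using p gamma C_pos by (intro tendsto_divide tendsto_scaled_powr_at_right_0) auto
  then have "\<forall>\<^sub>F d in at_right 0. ((1 + C) * d) powr (p - 1) / \<gamma> < \<epsilon>"
    using assms(1) by (auto dest: order_tendstoD(2))
  ultimately have "\<forall>\<^sub>F d in at_right 0. 0 < d \<and> C * d < min \<epsilon> (1/2) \<and> d powr p / (p * \<gamma>) < \<epsilon> \<and>
      ((1 + C) * d) powr (p - 1) / \<gamma> < \<epsilon> \<and> \<rho> * \<gamma> < (p - 1) * ((1 + C) * d) powr (p - 2)"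
    using eventually_at_right_less[of "0::real"] large_modulus by eventually_elim blast
  from eventually_happens'[OF _ this] show ?thesis
    by (auto intro: less_imp_le)
qed

end

text \<open>
  The conditions on \<open>\<delta>\<close> keep the proximal points of \<open>ball 0 \<delta>\<close> and their subgradients inside
  the neighbourhood where prox-regularity applies, and let strong monotonicity of \<open>g\<close> on the ball
  of radius \<open>(1 + C) \<delta>\<close> dominate the hypomonotonicity of the subgradients.
\<close>
locale calm_prox_regular = calm_prox +
  fixes q \<epsilon> \<rho> \<delta> :: real
  assumes preg: "q_prox_regular q \<phi> 0 0 \<epsilon> \<rho>" and q: "2 \<le> q"
    and delta: "0 < \<delta>" "C * \<delta> \<le> min \<epsilon> (1/2)" "\<delta> powr p / (p * \<gamma>) < \<epsilon>"
      "((1 + C) * \<delta>) powr (p - 1) / \<gamma> \<le> \<epsilon>" "\<rho> * \<gamma> < (p - 1) * ((1 + C) * \<delta>) powr (p - 2)"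
begin

definition R where "R = (1 + C) * \<delta>"

lemma rho_gamma_nonneg: "0 \<le> \<rho> * \<gamma>"
  using preg gamma by (simp add: q_prox_regular_def)

lemma prox_near_0:
  assumes x: "x \<in> ball 0 \<delta>" and y: "y \<in> prox p \<gamma> \<phi> x"
  shows "norm y \<le> 1/2" and "y \<in> cball 0 \<epsilon>" and "\<phi> y < \<phi> 0 + ereal \<epsilon>" and "norm (x - y) \<le> R"
    and "(1/\<gamma>) *\<^sub>R norm_powr_grad p (x - y) \<in> limiting_subdiff \<phi> y \<inter> cball 0 \<epsilon>"
proof -
  have "norm x < \<delta>" using x by simp
  have "norm y \<le> C * norm x" by (rule prox_bounds(3)[OF y])
  also have "\<dots> \<le> C * \<delta>" using \<open>norm x < \<delta>\<close> C_pos by simp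
  finally have "norm y \<le> C * \<delta>" .
  then show "norm y \<le> 1/2" and "y \<in> cball 0 \<epsilon>" using delta(2) by auto
  have "norm (x - y) \<le> norm x + norm y" by (rule norm_triangle_ineq4)
  with \<open>norm x < \<delta>\<close> \<open>norm y \<le> C * \<delta>\<close> show "norm (x - y) \<le> R"
    by (simp add: R_def algebra_simps)
  have "norm x powr p / (p * \<gamma>) \<le> \<delta> powr p / (p * \<gamma>)"
    using \<open>norm x < \<delta>\<close> p gamma by (intro divide_right_mono powr_mono2) auto
  then show "\<phi> y < \<phi> 0 + ereal \<epsilon>"
    using prox_bounds(1)[OF y] delta(3) phi0 by (simp add: le_less_trans)
  have "norm ((1/\<gamma>) *\<^sub>R norm_powr_grad p (x - y)) = norm (x - y) powr (p - 1) / \<gamma>"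
    using gamma by (simp add: norm_norm_powr_grad)
  also have "\<dots> \<le> R powr (p - 1) / \<gamma>"
    using \<open>norm (x - y) \<le> R\<close> p gamma by (intro divide_right_mono powr_mono2) auto
  also have "\<dots> \<le> \<epsilon>" using delta(4) by (simp add: R_def)
  finally show "(1/\<gamma>) *\<^sub>R norm_powr_grad p (x - y) \<in> limiting_subdiff \<phi> y \<inter> cball 0 \<epsilon>"
    using prox_frechet_subgradient[OF p gamma(1) y prox_bounds(2)[OF y]]
      frechet_subdiff_subset_limiting_subdiff by auto
qed

lemma prox_hypomonotone:
  assumes x1: "x1 \<in> ball 0 \<delta>" and y1: "y1 \<in> prox p \<gamma> \<phi> x1"
    and x2: "x2 \<in> ball 0 \<delta>" and y2: "y2 \<in> prox p \<gamma> \<phi> x2"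
  shows "- (\<rho> * \<gamma>) * (norm (y1 - y2))^2 \<le> inner (norm_powr_grad p (x1 - y1) - norm_powr_grad p (x2 - y2)) (y1 - y2)"
proof -
  have "- \<rho> * norm (y1 - y2) powr q
      \<le> inner ((1/\<gamma>) *\<^sub>R norm_powr_grad p (x1 - y1) - (1/\<gamma>) *\<^sub>R norm_powr_grad p (x2 - y2)) (y1 - y2)"
    using q_prox_regular_hypomonotone[OF preg] prox_near_0[OF x1 y1] prox_near_0[OF x2 y2] by simp
  then have "- (\<rho> * \<gamma>) * norm (y1 - y2) powr q
      \<le> inner (norm_powr_grad p (x1 - y1) - norm_powr_grad p (x2 - y2)) (y1 - y2)"
    using gamma by (simp add: inner_diff_left field_simps)
  moreover have "norm (y1 - y2) powr q \<le> (norm (y1 - y2))^2"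
  proof -
    have "norm (y1 - y2) \<le> 1"
      using norm_triangle_ineq4[of y1 y2] prox_near_0(1)[OF x1 y1] prox_near_0(1)[OF x2 y2] by linarith
    then show ?thesis
      using powr_mono'[of 2 q "norm (y1 - y2)"] q by (cases "y1 = y2") (simp_all add: powr_realpow)
  qed
  then have "\<rho> * \<gamma> * norm (y1 - y2) powr q \<le> \<rho> * \<gamma> * (norm (y1 - y2))^2"
    using rho_gamma_nonneg by (rule mult_left_mono)
  with \<open>- (\<rho> * \<gamma>) * norm (y1 - y2) powr q \<le> _\<close> show ?thesis
    unfolding mult_minus_left by linarith
qed

lemma prox_quadratic_estimate:
  assumes x1: "x1 \<in> ball 0 \<delta>" and y1: "y1 \<in> prox p \<gamma> \<phi> x1"
    and x2: "x2 \<in> ball 0 \<delta>" and y2: "y2 \<in> prox p \<gamma> \<phi> x2"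
  defines "a \<equiv> norm (x1 - x2)" and "b \<equiv> norm ((x1 - y1) - (x2 - y2))"
  shows "(p - 1) * R powr (p - 2) * b^2 \<le> 2 * R powr (p - 1) * a + \<rho> * \<gamma> * (a + b)^2"
proof -
  define u1 u2 where "u1 = x1 - y1" and "u2 = x2 - y2"
  define G where "G = norm_powr_grad p u1 - norm_powr_grad p u2"
  have u: "norm u1 \<le> R" "norm u2 \<le> R"
    using prox_near_0(4)[OF x1 y1] prox_near_0(4)[OF x2 y2] by (simp_all add: u1_def u2_def)
  have y_diff: "y1 - y2 = (x1 - x2) - (u1 - u2)" by (simp add: u1_def u2_def)
  have strong: "(p - 1) * R powr (p - 2) * b^2 \<le> inner G (u1 - u2)"
    using norm_powr_grad_strongly_monotone[OF p u] by (simp add: b_def G_def u1_def u2_def)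
  have "- (\<rho> * \<gamma>) * (norm (y1 - y2))^2 \<le> inner G (y1 - y2)"
    using prox_hypomonotone[OF x1 y1 x2 y2] unfolding G_def u1_def u2_def .
  then have hypo: "- (\<rho> * \<gamma>) * (norm (y1 - y2))^2 \<le> inner G (x1 - x2) - inner G (u1 - u2)"
    unfolding y_diff inner_diff_right .
  have "norm G \<le> 2 * R powr (p - 1)"
    using norm_triangle_ineq4[of "norm_powr_grad p u1" "norm_powr_grad p u2"]
      norm_norm_powr_grad_le[OF p(1) u(1)] norm_norm_powr_grad_le[OF p(1) u(2)]
    by (simp add: G_def)
  then have "inner G (x1 - x2) \<le> 2 * R powr (p - 1) * a"
    using norm_cauchy_schwarz[of G "x1 - x2"] mult_right_mono[of "norm G" "2 * R powr (p - 1)" a]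
    by (simp add: a_def)
  moreover have "\<rho> * \<gamma> * (norm (y1 - y2))^2 \<le> \<rho> * \<gamma> * (a + b)^2"
    using y_diff norm_triangle_ineq4[of "x1 - x2" "u1 - u2"] rho_gamma_nonneg
    by (intro mult_left_mono power_mono) (auto simp: a_def b_def u1_def u2_def)
  ultimately show ?thesis
    using strong hypo unfolding mult_minus_left by linarith
qed

definition \<theta> where "\<theta> = (p - 1) * R powr (p - 2) - \<rho> * \<gamma>"
definition K where "K = 2 * R powr (p - 1) + 4 * \<rho> * \<gamma> * R + 2 * \<rho> * \<gamma> * \<delta>"

lemma theta_pos: "0 < \<theta>"
  using delta(5) by (simp add: \<theta>_def R_def)

lemma prox_key_estimate:
  assumes x1: "x1 \<in> ball 0 \<delta>" and y1: "y1 \<in> prox p \<gamma> \<phi> x1"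
    and x2: "x2 \<in> ball 0 \<delta>" and y2: "y2 \<in> prox p \<gamma> \<phi> x2"
  shows "\<theta> * (norm ((x1 - y1) - (x2 - y2)))^2 \<le> K * norm (x1 - x2)"
proof -
  define a b where "a = norm (x1 - x2)" and "b = norm ((x1 - y1) - (x2 - y2))"
  have "\<theta> * b^2 \<le> a * (2 * R powr (p - 1) + \<rho> * \<gamma> * a + 2 * \<rho> * \<gamma> * b)"
    using prox_quadratic_estimate[OF x1 y1 x2 y2]
    by (simp add: a_def b_def \<theta>_def algebra_simps power2_eq_square)
  also have "\<dots> \<le> a * K"
  proof (rule mult_left_mono)
    have "a \<le> 2 * \<delta>"
      using norm_triangle_ineq4[of x1 x2] x1 x2 by (simp add: a_def)
    moreover have "b \<le> 2 * R"
      using norm_triangle_ineq4[of "x1 - y1" "x2 - y2"] prox_near_0(4)[OF x1 y1] prox_near_0(4)[OF x2 y2]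
      by (simp add: b_def)
    ultimately show "2 * R powr (p - 1) + \<rho> * \<gamma> * a + 2 * \<rho> * \<gamma> * b \<le> K"
      using mult_left_mono[OF \<open>a \<le> 2 * \<delta>\<close> rho_gamma_nonneg] mult_left_mono[OF \<open>b \<le> 2 * R\<close> rho_gamma_nonneg]
      by (simp add: K_def)
  qed (simp add: a_def)
  finally show ?thesis
    by (simp add: a_def b_def mult.commute)
qed

lemma prox_unique:
  assumes x: "x \<in> ball 0 \<delta>" and y1: "y1 \<in> prox p \<gamma> \<phi> x" and y2: "y2 \<in> prox p \<gamma> \<phi> x"
  shows "y1 = y2"
proof -
  have "\<theta> * (norm (y2 - y1))^2 \<le> 0"
    using prox_key_estimate[OF x y1 x y2] by simp
  then show ?thesis
    using theta_pos by (simp add: mult_le_0_iff)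
qed

lemma prox_singleton: "x \<in> ball 0 \<delta> \<Longrightarrow> \<exists>y. prox p \<gamma> \<phi> x = {y}"
  using prox_nonempty[of x] prox_unique[of x] by blast

lemma the_elem_prox_mem: "x \<in> ball 0 \<delta> \<Longrightarrow> the_elem (prox p \<gamma> \<phi> x) \<in> prox p \<gamma> \<phi> x"
  using prox_singleton by fastforce

lemma continuous_on_prox: "continuous_on (ball 0 \<delta>) (\<lambda>x. the_elem (prox p \<gamma> \<phi> x))"
  unfolding continuous_on_eq_continuous_at[OF open_ball] isCont_def
proof
  fix x :: 'a assume x: "x \<in> ball 0 \<delta>"
  define P where "P x = the_elem (prox p \<gamma> \<phi> x)" for x
  have P: "P x \<in> prox p \<gamma> \<phi> x" if "x \<in> ball 0 \<delta>" for x
    using the_elem_prox_mem[OF that] by (simp add: P_def)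
  define bound where "bound x' = norm (x' - x) + sqrt (K * norm (x' - x) / \<theta>)" for x'
  have "isCont bound x"
    unfolding bound_def using theta_pos by (intro continuous_intros) auto
  then have "(bound \<longlongrightarrow> 0) (at x)"
    by (simp add: isCont_def bound_def)
  moreover have "\<forall>\<^sub>F x' in at x. norm (P x' - P x) \<le> bound x'"
    using eventually_at_in_open'[OF open_ball x]
  proof eventually_elim
    case (elim x')
    define b where "b = norm ((x' - P x') - (x - P x))"
    have "\<theta> * b^2 \<le> K * norm (x' - x)"
      using prox_key_estimate[OF elim P[OF elim] x P[OF x]] by (simp add: b_def)
    then have "b \<le> sqrt (K * norm (x' - x) / \<theta>)"
      using theta_pos by (intro real_le_rsqrt) (simp add: b_def field_simps)
    moreover have "norm (P x' - P x) \<le> norm (x' - x) + b"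
      using norm_triangle_ineq4[of "x' - x" "(x' - P x') - (x - P x)"] by (simp add: b_def)
    ultimately show ?case
      by (simp add: bound_def)
  qed
  ultimately have "((\<lambda>x'. P x' - P x) \<longlongrightarrow> 0) (at x)"
    by (rule Lim_null_comparison[rotated])
  then show "((\<lambda>x. the_elem (prox p \<gamma> \<phi> x)) \<longlongrightarrow> the_elem (prox p \<gamma> \<phi> x)) (at x)"
    unfolding P_def by (rule LIM_zero_cancel)
qed

lemma C1_on_moreau_env: "C1_on (ball 0 \<delta>) (moreau_env p \<gamma> \<phi>)"
  by (rule moreau_env_C1_on[OF p gamma(1) open_ball continuous_on_prox the_elem_prox_mem
        prox_bounds(2)[OF the_elem_prox_mem]])

end

theorem theorem5:
  fixes \<phi> :: "'a::euclidean_space \<Rightarrow> ereal"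
    and p q M \<epsilon> \<rho> \<gamma> :: real
  assumes p: "1 < p" "p \<le> 2"
    and proper: "proper_fun \<phi>" and lsc: "lsc \<phi>"
    and M: "M > 0" and calm: "p_calm p \<phi> 0 M"
    and phi0: "\<phi> 0 = 0"
    and q: "q \<ge> 2" and eps: "\<epsilon> > 0" and rho: "\<rho> > 0"
    and sub0: "0 \<in> limiting_subdiff \<phi> 0"
    and preg: "q_prox_regular q \<phi> 0 0 \<epsilon> \<rho>"
    and gamma: "(p < 2 \<and> 0 < \<gamma> \<and> \<gamma> < 2 powr (1 - p) / (M * p)) \<or>
                (p = 2 \<and> 0 < \<gamma> \<and> \<gamma> < min (1 / (4 * M)) (1 / \<rho>))"
  shows "\<exists>U. open U \<and> 0 \<in> U \<and>
           (\<forall>x\<in>U. \<exists>y. prox p \<gamma> \<phi> x = {y}) \<and>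
           continuous_on U (\<lambda>x. the_elem (prox p \<gamma> \<phi> x)) \<and>
           C1_on U (moreau_env p \<gamma> \<phi>)"
proof -
  have "0 < \<gamma>" using gamma by auto
  have gamma_bound: "M * p * \<gamma> < 2 powr (1 - p)"
    using gamma M p by (auto simp: field_simps powr_minus_divide)
  have rho_bound: "\<rho> * \<gamma> < 1" if "p = 2"
  proof -
    have "\<gamma> < min (1 / (4 * M)) (1 / \<rho>)" using gamma that by simp
    then show ?thesis using rho by (simp add: field_simps min_less_iff_conj)
  qed
  interpret calm_prox \<phi> p M \<gamma>
    using p proper lsc calm phi0 \<open>0 < \<gamma>\<close> gamma_bound by unfold_locales (auto simp: proper_fun_def)
  obtain \<delta> where "\<delta> > 0" "C * \<delta> \<le> min \<epsilon> (1/2)" "\<delta> powr p / (p * \<gamma>) < \<epsilon>"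
    "((1 + C) * \<delta>) powr (p - 1) / \<gamma> \<le> \<epsilon>" "\<rho> * \<gamma> < (p - 1) * ((1 + C) * \<delta>) powr (p - 2)"
    using exists_local_radius[OF eps rho_bound] by blast
  then interpret calm_prox_regular \<phi> p M \<gamma> q \<epsilon> \<rho> \<delta>
    using preg q by unfold_locales
  show ?thesis
    using prox_singleton continuous_on_prox C1_on_moreau_env \<open>\<delta> > 0\<close>
    by (intro exI[of _ "ball 0 \<delta>"]) auto
qed
end
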